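(* Let $a,b,c,d>0$. Then \[ \frac12\,\frac{\left(a^{2}d^{2}-b^{2}c^{2}\right)^{2}}{a^{2}d^{2}+b^{2}c^{2}}+\left(a^{2}-b^{2}\right)\left(c^{2}-d^{2}\right)\le (ac-bd)^{2}. \] *)

theory Defs
  imports Complex_Main
begin

end

theory Submission
  imports Defs
begin

(* With x = a d and y = b c, the right-hand side minus (a^2 - b^2)(c^2 - d^2) is (x - y)^2,
   and the remaining inequality (x^2 - y^2)^2 <= 2 (x - y)^2 (x^2 + y^2) is
   (x + y)^2 <= 2 (x^2 + y^2) multiplied by (x - y)^2. *)

lemma square_diff_minus_prod_diff_squares:
  fixes a b c d :: "'a::comm_ring_1"
  shows "(a * c - b * d)^2 - (a^2 - b^2) * (c^2 - d^2) = (a * d - b * c)^2"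
  by (simp add: power2_eq_square algebra_simps)

lemma square_diff_squares_le:
  fixes x y :: "'a::linordered_idom"
  shows "(x^2 - y^2)^2 \<le> 2 * (x - y)^2 * (x^2 + y^2)"
proof -
  have "(x + y)^2 \<le> 2 * (x^2 + y^2)"
    using sum_squares_ge_zero[of "x - y" 0] by (simp add: power2_eq_square algebra_simps)
  then have "(x - y)^2 * (x + y)^2 \<le> (x - y)^2 * (2 * (x^2 + y^2))"
    by (rule mult_left_mono) simp
  moreover have "(x^2 - y^2)^2 = (x - y)^2 * (x + y)^2"
    by (simp add: power2_eq_square algebra_simps)
  ultimately show ?thesis
    by (simp add: algebra_simps)
qed

lemma half_square_diff_squares_div_le:
  fixes x y :: "'a::linordered_field"
  shows "(1/2) * ((x^2 - y^2)^2 / (x^2 + y^2)) \<le> (x - y)^2"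
proof (cases "x^2 + y^2 = 0")
  case False
  then have "x^2 + y^2 > 0"
    using sum_power2_ge_zero[of x y] by linarith
  then show ?thesis
    using square_diff_squares_le[of x y] by (simp add: field_simps)
qed simp

theorem lemma4p4:
  fixes a b c d :: real
  assumes "a > 0" and "b > 0" and "c > 0" and "d > 0"
  shows "(1/2) * ((a^2 * d^2 - b^2 * c^2)^2 / (a^2 * d^2 + b^2 * c^2))
           + (a^2 - b^2) * (c^2 - d^2) \<le> (a * c - b * d)^2"
proof -
  have "(1/2) * (((a * d)^2 - (b * c)^2)^2 / ((a * d)^2 + (b * c)^2)) \<le> (a * d - b * c)^2"
    by (rule half_square_diff_squares_div_le)
  then show ?thesis
    using square_diff_minus_prod_diff_squares[of a c b d] by (simp add: power_mult_distrib)
qed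

end
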